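(* Let $\Sigma_{\mathrm{ID}}$ be a set of unary inclusion dependencies and $\Sigma_{\mathrm{FD}}$ a set of functional dependencies. Let $I$ and $N$ be instances and $\Delta:=\mathrm{Adom}(I)\cap\mathrm{Adom}(N)$. Assume that $I$ satisfies $\Sigma_{\mathrm{FD}}\cup\Sigma_{\mathrm{ID}}$, that $I\cup N$ satisfies $\Sigma_{\mathrm{FD}}$, and that whenever $a\in\Delta$ occurs at a position $(R,i)$ in $N$ then it also occurs at position $(R,i)$ in $I$. Let $W$ denote the result of chasing $N$ by $\Sigma_{\mathrm{ID}}$ where no trigger mapping an exported variable to an element of $\Delta$ is ever fired. Then $I\cup W$ satisfies $\Sigma_{\mathrm{ID}}\cup\Sigma_{\mathrm{FD}}$.
   Context: A unary inclusion dependency (UID) is a TGD $R(\vec x)\rightarrow\exists\vec y\,S(\vec z)$ with single body and head atoms, no repeated variables, and exactly one exported variable (variable of the body occurring in the head). A functional dependency $D\rightarrow j$ on $R$ asserts that two $R$-facts agreeing on positions in $D$ agree on position $j$. $\mathrm{Adom}(I)$ is the set of values occurring in $I$; an element $a$ occurs at position $(R,i)$ in an instance if some $R$-fact has $a$ as its $i$-th argument. A trigger for a TGD in an instance is a homomorphism from its body to the instance; it is active if it does not extend to a homomorphism of the head. The chase repeatedly fires active triggers (fairly, in rounds), adding facts that instantiate the head with fresh elements (nulls) for existential variables; the result may be infinite. *)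

theory Defs
  imports Main
begin

text \<open>A fact is a relation name together with a tuple of values (positions are
0-based list indices). An instance is a (possibly infinite) set of facts.
A schema assigns an arity to every relation name.\<close>

type_synonym ('r, 'v) fact = "'r \<times> 'v list"
type_synonym ('r, 'v) inst = "('r, 'v) fact set"

definition adom :: "('r, 'v) inst \<Rightarrow> 'v set" where
  "adom I = (\<Union>(R, t)\<in>I. set t)"

definition wf_instance :: "('r \<Rightarrow> nat) \<Rightarrow> ('r, 'v) inst \<Rightarrow> bool" where
  "wf_instance ar I \<longleftrightarrow> (\<forall>(R, t)\<in>I. length t = ar R)"

definition occurs_at :: "('r, 'v) inst \<Rightarrow> 'v \<Rightarrow> 'r \<Rightarrow> nat \<Rightarrow> bool" where
  "occurs_at I a R i \<longleftrightarrow> (\<exists>t. (R, t) \<in> I \<and> i < length t \<and> t ! i = a)"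

datatype ('r, 'x) atom = Atom 'r "'x list"

fun atom_rel :: "('r, 'x) atom \<Rightarrow> 'r" where "atom_rel (Atom R xs) = R"
fun atom_args :: "('r, 'x) atom \<Rightarrow> 'x list" where "atom_args (Atom R xs) = xs"

definition atom_vars :: "('r, 'x) atom \<Rightarrow> 'x set" where
  "atom_vars A = set (atom_args A)"

text \<open>A TGD with a single body atom and a single head atom:
  body(x) --> exists y. head(z); the existential variables are the head variables
  not occurring in the body.\<close>
type_synonym ('r, 'x) tgd = "('r, 'x) atom \<times> ('r, 'x) atom"

definition tgd_body :: "('r, 'x) tgd \<Rightarrow> ('r, 'x) atom" where "tgd_body \<tau> = fst \<tau>"
definition tgd_head :: "('r, 'x) tgd \<Rightarrow> ('r, 'x) atom" where "tgd_head \<tau> = snd \<tau>"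

definition exported_vars :: "('r, 'x) tgd \<Rightarrow> 'x set" where
  "exported_vars \<tau> = atom_vars (tgd_body \<tau>) \<inter> atom_vars (tgd_head \<tau>)"

definition is_UID :: "('r \<Rightarrow> nat) \<Rightarrow> ('r, 'x) tgd \<Rightarrow> bool" where
  "is_UID ar \<tau> \<longleftrightarrow>
     length (atom_args (tgd_body \<tau>)) = ar (atom_rel (tgd_body \<tau>)) \<and>
     length (atom_args (tgd_head \<tau>)) = ar (atom_rel (tgd_head \<tau>)) \<and>
     distinct (atom_args (tgd_body \<tau>)) \<and> distinct (atom_args (tgd_head \<tau>)) \<and>
     card (exported_vars \<tau>) = 1"

definition atom_maps :: "('x \<Rightarrow> 'v) \<Rightarrow> ('r, 'x) atom \<Rightarrow> ('r, 'v) inst \<Rightarrow> bool" where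
  "atom_maps h A I \<longleftrightarrow> (atom_rel A, map h (atom_args A)) \<in> I"

definition trigger :: "('r, 'x) tgd \<Rightarrow> ('r, 'v) inst \<Rightarrow> ('x \<Rightarrow> 'v) \<Rightarrow> bool" where
  "trigger \<tau> I h \<longleftrightarrow> atom_maps h (tgd_body \<tau>) I"

definition active_trigger :: "('r, 'x) tgd \<Rightarrow> ('r, 'v) inst \<Rightarrow> ('x \<Rightarrow> 'v) \<Rightarrow> bool" where
  "active_trigger \<tau> I h \<longleftrightarrow> trigger \<tau> I h \<and>
     \<not> (\<exists>h'. (\<forall>x\<in>atom_vars (tgd_body \<tau>). h' x = h x) \<and> atom_maps h' (tgd_head \<tau>) I)"

definition satisfies_tgd :: "('r, 'v) inst \<Rightarrow> ('r, 'x) tgd \<Rightarrow> bool" where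
  "satisfies_tgd I \<tau> \<longleftrightarrow> (\<forall>h. \<not> active_trigger \<tau> I h)"

text \<open>An FD (R, D, j) stands for D -> j on R.\<close>
type_synonym 'r fd = "'r \<times> nat set \<times> nat"

definition is_FD :: "('r \<Rightarrow> nat) \<Rightarrow> 'r fd \<Rightarrow> bool" where
  "is_FD ar \<phi> \<longleftrightarrow> (case \<phi> of (R, D, j) \<Rightarrow> D \<subseteq> {..<ar R} \<and> j < ar R)"

definition satisfies_fd :: "('r, 'v) inst \<Rightarrow> 'r fd \<Rightarrow> bool" where
  "satisfies_fd I \<phi> \<longleftrightarrow> (case \<phi> of (R, D, j) \<Rightarrow>
     (\<forall>t t'. (R, t) \<in> I \<longrightarrow> (R, t') \<in> I \<longrightarrow> (\<forall>i\<in>D. t ! i = t' ! i) \<longrightarrow> t ! j = t' ! j))"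

text \<open>Firing trigger h of \<tau> on instance C: add the head instantiated by an extension h'
of h that sends the existential variables injectively to fresh nulls, i.e. elements
not in the current instance and not in the reserved set U of already used
values (U accounts for globally fresh nulls).\<close>
definition fire :: "'v set \<Rightarrow> ('r, 'x) tgd \<Rightarrow> ('r, 'v) inst \<Rightarrow> ('x \<Rightarrow> 'v)
    \<Rightarrow> ('r, 'v) inst \<Rightarrow> bool" where
  "fire U \<tau> C h C' \<longleftrightarrow> (\<exists>h'.
     (\<forall>x\<in>atom_vars (tgd_body \<tau>). h' x = h x) \<and>
     inj_on h' (atom_vars (tgd_head \<tau>) - atom_vars (tgd_body \<tau>)) \<and>
     h' ` (atom_vars (tgd_head \<tau>) - atom_vars (tgd_body \<tau>)) \<inter> (adom C \<union> U) = {} \<and>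
     C' = insert (atom_rel (tgd_head \<tau>), map h' (atom_args (tgd_head \<tau>))) C)"

definition allowed_trigger :: "'v set \<Rightarrow> ('r, 'x) tgd \<Rightarrow> ('r, 'v) inst \<Rightarrow> ('x \<Rightarrow> 'v) \<Rightarrow> bool" where
  "allowed_trigger \<Delta> \<tau> C h \<longleftrightarrow> active_trigger \<tau> C h \<and> (\<forall>x\<in>exported_vars \<tau>. h x \<notin> \<Delta>)"

text \<open>A fair chase sequence of N by \<Sigma> in which no trigger mapping an exported variable
into Delta is fired: each step fires one allowed active trigger (or stays put if
there is none), and every allowed active trigger eventually becomes inactive.\<close>
definition chase_seq :: "'v set \<Rightarrow> 'v set \<Rightarrow> ('r, 'x) tgd set \<Rightarrow> ('r, 'v) inst
    \<Rightarrow> (nat \<Rightarrow> ('r, 'v) inst) \<Rightarrow> bool" where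
  "chase_seq U \<Delta> \<Sigma> N C \<longleftrightarrow>
     C 0 = N \<and>
     (\<forall>k. (\<exists>\<tau>\<in>\<Sigma>. \<exists>h. allowed_trigger \<Delta> \<tau> (C k) h \<and> fire U \<tau> (C k) h (C (Suc k)))
          \<or> ((\<forall>\<tau>\<in>\<Sigma>. \<forall>h. \<not> allowed_trigger \<Delta> \<tau> (C k) h) \<and> C (Suc k) = C k)) \<and>
     (\<forall>k. \<forall>\<tau>\<in>\<Sigma>. \<forall>h. allowed_trigger \<Delta> \<tau> (C k) h \<longrightarrow>
          (\<exists>m\<ge>k. \<not> active_trigger \<tau> (C m) h))"

definition chase_result :: "'v set \<Rightarrow> 'v set \<Rightarrow> ('r, 'x) tgd set \<Rightarrow> ('r, 'v) inst
    \<Rightarrow> ('r, 'v) inst \<Rightarrow> bool" where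
  "chase_result U \<Delta> \<Sigma> N W \<longleftrightarrow> (\<exists>C. chase_seq U \<Delta> \<Sigma> N C \<and> W = (\<Union>k. C k))"

end

theory Submission
  imports Defs
begin

text \<open>Call a fact created by the chase isolated if none of its values lies in \<open>Adom(I)\<close> and
no other fact of the same relation agrees with it at any position. Its non-exported positions
carry fresh nulls; at the exported position it carries the value \<open>h x\<close> of the fired trigger,
which avoids \<open>Adom(I)\<close> (it avoids \<open>\<Delta>\<close> and comes either from \<open>N\<close> or from an isolated
fact), and no earlier fact of the head relation can carry \<open>h x\<close> at that position, since the
trigger would then already be satisfied (a UID has a single exported variable and no repeated
variables). So every chase fact is isolated, and isolated facts cannot violate an FD with
nonempty left-hand side. For the UIDs, a trigger of \<open>I \<union> W\<close> whose exported value lies outside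
\<open>Adom(I)\<close> was eventually fired in the chase; otherwise its body fact is in \<open>I\<close>, or in \<open>N\<close> with a
value of \<open>\<Delta>\<close>, which then also occurs at the same position in \<open>I\<close>, where \<open>I\<close> satisfies the UID.\<close>

lemma exists_extension_map_eq:
  assumes "distinct xs" "length ys = length xs"
    and agree: "\<And>i. i < length xs \<Longrightarrow> xs ! i \<in> A \<Longrightarrow> ys ! i = h (xs ! i)"
  shows "\<exists>h'. (\<forall>z\<in>A. h' z = h z) \<and> map h' xs = ys"
proof -
  define h' where "h' z = (if z \<in> A then h z else the (map_of (zip xs ys) z))" for z
  have "map h' xs = ys"
    by (rule nth_equalityI) (use assms in \<open>auto simp: h'_def map_of_zip_nth\<close>)
  then show ?thesis by (intro exI[of _ h']) (simp add: h'_def)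
qed

definition extends_to_head :: "('r, 'x) tgd \<Rightarrow> ('r, 'v) inst \<Rightarrow> ('x \<Rightarrow> 'v) \<Rightarrow> bool" where
  "extends_to_head \<tau> J h \<longleftrightarrow>
     (\<exists>h'. (\<forall>x\<in>atom_vars (tgd_body \<tau>). h' x = h x) \<and> atom_maps h' (tgd_head \<tau>) J)"

lemma active_trigger_iff: "active_trigger \<tau> J h \<longleftrightarrow> trigger \<tau> J h \<and> \<not> extends_to_head \<tau> J h"
  unfolding active_trigger_def extends_to_head_def ..

lemma satisfies_tgd_iff: "satisfies_tgd J \<tau> \<longleftrightarrow> (\<forall>h. trigger \<tau> J h \<longrightarrow> extends_to_head \<tau> J h)"
  unfolding satisfies_tgd_def active_trigger_iff by blast

lemma extends_to_head_mono: "extends_to_head \<tau> J h \<Longrightarrow> J \<subseteq> J' \<Longrightarrow> extends_to_head \<tau> J' h"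
  unfolding extends_to_head_def atom_maps_def by blast

lemma trigger_mono: "trigger \<tau> J h \<Longrightarrow> J \<subseteq> J' \<Longrightarrow> trigger \<tau> J' h"
  unfolding trigger_def atom_maps_def by blast

lemma UID_exported_var:
  assumes "is_UID ar \<tau>" obtains x where "exported_vars \<tau> = {x}"
  using assms unfolding is_UID_def by (meson card_1_singletonE)

lemma UID_extends_to_head_fact:
  assumes U: "is_UID ar \<tau>" and x: "exported_vars \<tau> = {x}"
    and t: "(atom_rel (tgd_head \<tau>), t) \<in> J" "length t = ar (atom_rel (tgd_head \<tau>))"
    and d: "d < length (atom_args (tgd_head \<tau>))" "atom_args (tgd_head \<tau>) ! d = x" "t ! d = h x"
  shows "extends_to_head \<tau> J h"
proof -
  let ?hs = "atom_args (tgd_head \<tau>)"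
  have dist: "distinct ?hs" and len: "length t = length ?hs"
    using U t unfolding is_UID_def by auto
  have "t ! i = h (?hs ! i)" if "i < length ?hs" "?hs ! i \<in> atom_vars (tgd_body \<tau>)" for i
  proof -
    have "?hs ! i \<in> exported_vars \<tau>"
      using that unfolding exported_vars_def atom_vars_def by auto
    then have "i = d" using x d dist that(1) nth_eq_iff_index_eq by fastforce
    then show ?thesis using d by simp
  qed
  then obtain h' where "\<forall>z\<in>atom_vars (tgd_body \<tau>). h' z = h z" "map h' ?hs = t"
    using exists_extension_map_eq[OF dist len] by blast
  then show ?thesis using t(1) unfolding extends_to_head_def atom_maps_def by auto
qed

lemma UID_extends_to_head_body_fact:
  assumes U: "is_UID ar \<tau>" and x: "exported_vars \<tau> = {x}" and sat: "satisfies_tgd J \<tau>"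
    and t: "(atom_rel (tgd_body \<tau>), t) \<in> J" "length t = ar (atom_rel (tgd_body \<tau>))"
    and i: "i < length (atom_args (tgd_body \<tau>))" "atom_args (tgd_body \<tau>) ! i = x" "t ! i = h x"
  shows "extends_to_head \<tau> J h"
proof -
  let ?bs = "atom_args (tgd_body \<tau>)" and ?hs = "atom_args (tgd_head \<tau>)"
  have "distinct ?bs" "length t = length ?bs" using U t unfolding is_UID_def by auto
  then obtain g where g: "map g ?bs = t"
    using exists_extension_map_eq[where A="{}"] by blast
  then have "trigger \<tau> J g" using t(1) unfolding trigger_def atom_maps_def by simp
  with sat obtain g' where g': "\<forall>z\<in>atom_vars (tgd_body \<tau>). g' z = g z" "atom_maps g' (tgd_head \<tau>) J"
    unfolding satisfies_tgd_iff extends_to_head_def by blast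
  have "x \<in> atom_vars (tgd_head \<tau>)" "x \<in> atom_vars (tgd_body \<tau>)"
    using x unfolding exported_vars_def by auto
  then obtain d where d: "d < length ?hs" "?hs ! d = x" unfolding atom_vars_def by (metis in_set_conv_nth)
  have "g' x = h x" using g' \<open>x \<in> atom_vars (tgd_body \<tau>)\<close> g i by auto
  moreover have "length (map g' ?hs) = ar (atom_rel (tgd_head \<tau>))"
    using U unfolding is_UID_def by simp
  ultimately show ?thesis
    using UID_extends_to_head_fact[OF U x g'(2)[unfolded atom_maps_def] _ d] d by simp
qed

lemma mem_adom: "(R, t) \<in> J \<Longrightarrow> v \<in> set t \<Longrightarrow> v \<in> adom J"
  unfolding adom_def by blast

definition isolated_fact :: "'v set \<Rightarrow> ('r, 'v) inst \<Rightarrow> 'r \<Rightarrow> 'v list \<Rightarrow> bool" where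
  "isolated_fact A J R t \<longleftrightarrow> set t \<inter> A = {} \<and>
     (\<forall>t' d. (R, t') \<in> J \<longrightarrow> d < length t \<longrightarrow> d < length t' \<longrightarrow> t' ! d = t ! d \<longrightarrow> t' = t)"

lemma fired_fact_differs_everywhere:
  assumes U: "is_UID ar \<tau>" and wf: "wf_instance ar C" and act: "active_trigger \<tau> C h"
    and agree: "\<forall>z\<in>atom_vars (tgd_body \<tau>). h' z = h z"
    and fresh: "h' ` (atom_vars (tgd_head \<tau>) - atom_vars (tgd_body \<tau>)) \<inter> adom C = {}"
    and t': "(atom_rel (tgd_head \<tau>), t') \<in> C" "d < length t'"
    and d: "d < length (atom_args (tgd_head \<tau>))"
  shows "t' ! d \<noteq> h' (atom_args (tgd_head \<tau>) ! d)"
proof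
  assume eq: "t' ! d = h' (atom_args (tgd_head \<tau>) ! d)"
  let ?y = "atom_args (tgd_head \<tau>) ! d"
  have y_head: "?y \<in> atom_vars (tgd_head \<tau>)" using d unfolding atom_vars_def by simp
  obtain x where x: "exported_vars \<tau> = {x}" using U by (rule UID_exported_var)
  show False
  proof (cases "?y \<in> atom_vars (tgd_body \<tau>)")
    case True
    then have y: "?y = x" using x y_head unfolding exported_vars_def by blast
    have "length t' = ar (atom_rel (tgd_head \<tau>))"
      using wf t'(1) unfolding wf_instance_def by auto
    moreover have "t' ! d = h x" using eq agree True y by simp
    ultimately have "extends_to_head \<tau> C h"
      using UID_extends_to_head_fact[OF U x t'(1) _ d y] by blast
    then show False using act unfolding active_trigger_iff by blast
  next
    case False
    then have "h' ?y \<notin> adom C" using fresh y_head by blast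
    moreover have "t' ! d \<in> adom C" using mem_adom[OF t'(1) nth_mem[OF t'(2)]] .
    ultimately show False using eq by simp
  qed
qed

lemma trigger_value_notin:
  assumes inv: "\<forall>R t. (R, t) \<in> C - N \<longrightarrow> isolated_fact A C R t" and trig: "trigger \<tau> C h"
    and z: "z \<in> atom_vars (tgd_body \<tau>)" and notin: "h z \<notin> A \<inter> adom N"
  shows "h z \<notin> A"
proof -
  let ?b = "(atom_rel (tgd_body \<tau>), map h (atom_args (tgd_body \<tau>)))"
  have b: "?b \<in> C" using trig unfolding trigger_def atom_maps_def .
  have hz: "h z \<in> set (snd ?b)" using z unfolding atom_vars_def by simp
  show ?thesis
  proof (cases "?b \<in> N")
    case True
    then show ?thesis using notin mem_adom[of _ _ N] hz by fastforce
  next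
    case False
    then show ?thesis using inv b hz unfolding isolated_fact_def by fastforce
  qed
qed

lemma fire_preserves_isolation:
  assumes U: "is_UID ar \<tau>" and wf: "wf_instance ar C"
    and inv: "\<forall>R t. (R, t) \<in> C - N \<longrightarrow> isolated_fact A C R t"
    and allowed: "allowed_trigger \<Delta> \<tau> C h" and \<Delta>: "A \<inter> adom N \<subseteq> \<Delta>" and AU: "A \<subseteq> U"
    and fire: "fire U \<tau> C h C'"
  shows "\<forall>R t. (R, t) \<in> C' - N \<longrightarrow> isolated_fact A C' R t"
proof -
  let ?B = "tgd_body \<tau>" and ?H = "tgd_head \<tau>" and ?hs = "atom_args (tgd_head \<tau>)"
  obtain h' where agree: "\<forall>z\<in>atom_vars ?B. h' z = h z"
    and fresh: "h' ` (atom_vars ?H - atom_vars ?B) \<inter> (adom C \<union> U) = {}"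
    and C': "C' = insert (atom_rel ?H, map h' ?hs) C"
    using fire unfolding fire_def by blast
  have act: "active_trigger \<tau> C h" and exp: "\<forall>z\<in>exported_vars \<tau>. h z \<notin> \<Delta>"
    using allowed unfolding allowed_trigger_def by auto
  have differs: "t' ! d \<noteq> map h' ?hs ! d"
    if "(atom_rel ?H, t') \<in> C" "d < length t'" "d < length (map h' ?hs)" for t' d
    using fired_fact_differs_everywhere[OF U wf act agree _ that(1,2)] fresh that(3) by auto
  have "map h' ?hs ! d \<notin> A" if "d < length ?hs" for d
  proof (cases "?hs ! d \<in> atom_vars ?B")
    case True
    then have "?hs ! d \<in> exported_vars \<tau>"
      using that unfolding exported_vars_def atom_vars_def by simp
    then have "h (?hs ! d) \<notin> A"
      using trigger_value_notin[OF inv _ True] act exp \<Delta> unfolding active_trigger_def by blast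
    then show ?thesis using agree True that by simp
  next
    case False
    then have "?hs ! d \<in> atom_vars ?H - atom_vars ?B" using that unfolding atom_vars_def by simp
    then show ?thesis using fresh AU that by auto
  qed
  then have "set (map h' ?hs) \<inter> A = {}" by (auto simp: in_set_conv_nth)
  then have new: "isolated_fact A C' (atom_rel ?H) (map h' ?hs)"
    using differs unfolding isolated_fact_def C' by blast
  have "isolated_fact A C' R t" if "(R, t) \<in> C - N" for R t
  proof -
    have "isolated_fact A C R t" using inv that by blast
    moreover have "t' ! d \<noteq> t ! d"
      if "(R, t') = (atom_rel ?H, map h' ?hs)" "d < length t" "d < length t'" for t' d
      using differs[of t d] that \<open>(R, t) \<in> C - N\<close> by auto
    ultimately show ?thesis unfolding isolated_fact_def C' by blast
  qed
  with new show ?thesis unfolding C' by blast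
qed

lemma fire_preserves_wf:
  assumes "is_UID ar \<tau>" "wf_instance ar C" "fire U \<tau> C h C'"
  shows "wf_instance ar C'"
  using assms unfolding fire_def wf_instance_def is_UID_def by auto

lemma chase_seq_Suc_cases:
  assumes "chase_seq U \<Delta> \<Sigma> N C"
  obtains "C (Suc k) = C k"
  | \<tau> h where "\<tau> \<in> \<Sigma>" "allowed_trigger \<Delta> \<tau> (C k) h" "fire U \<tau> (C k) h (C (Suc k))"
  using assms unfolding chase_seq_def by blast

lemma chase_seq_mono:
  assumes "chase_seq U \<Delta> \<Sigma> N C"
  shows "mono C"
  unfolding mono_iff_le_Suc
proof
  fix k show "C k \<subseteq> C (Suc k)"
    by (cases rule: chase_seq_Suc_cases[OF assms, of k]) (auto simp: fire_def)
qed

lemma chase_seq_invariant: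
  assumes chase: "chase_seq U \<Delta> \<Sigma> N C" and base: "P N"
    and step: "\<And>J J' \<tau> h. P J \<Longrightarrow> \<tau> \<in> \<Sigma> \<Longrightarrow> allowed_trigger \<Delta> \<tau> J h \<Longrightarrow>
       fire U \<tau> J h J' \<Longrightarrow> P J'"
  shows "P (C k)"
proof (induction k)
  case 0 then show ?case using chase base unfolding chase_seq_def by simp
next
  case (Suc k) then show ?case
    by (cases rule: chase_seq_Suc_cases[OF chase, of k]) (auto intro: step)
qed

lemma chase_seq_wf_isolated:
  assumes chase: "chase_seq U \<Delta> \<Sigma> N C" and UIDs: "\<forall>\<tau>\<in>\<Sigma>. is_UID ar \<tau>"
    and wfN: "wf_instance ar N" and \<Delta>: "A \<inter> adom N \<subseteq> \<Delta>" and AU: "A \<subseteq> U"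
  shows "wf_instance ar (C k) \<and> (\<forall>R t. (R, t) \<in> C k - N \<longrightarrow> isolated_fact A (C k) R t)"
proof (rule chase_seq_invariant[OF chase])
  show "wf_instance ar N \<and> (\<forall>R t. (R, t) \<in> N - N \<longrightarrow> isolated_fact A N R t)"
    using wfN by blast
next
  fix J J' \<tau> h
  assume "wf_instance ar J \<and> (\<forall>R t. (R, t) \<in> J - N \<longrightarrow> isolated_fact A J R t)"
    and "\<tau> \<in> \<Sigma>" "allowed_trigger \<Delta> \<tau> J h" "fire U \<tau> J h J'"
  then show "wf_instance ar J' \<and> (\<forall>R t. (R, t) \<in> J' - N \<longrightarrow> isolated_fact A J' R t)"
    using UIDs fire_preserves_wf fire_preserves_isolation[OF _ _ _ _ \<Delta> AU] by blast
qed

lemma isolated_fact_mono_chain: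
  fixes C :: "nat \<Rightarrow> ('r, 'v) inst"
  assumes mono: "mono C" and iso: "\<And>k. \<forall>R t. (R, t) \<in> C k - N \<longrightarrow> isolated_fact A (C k) R t"
    and Rt: "(R, t) \<in> (\<Union>k. C k) - N"
  shows "isolated_fact A (\<Union>k. C k) R t"
proof -
  obtain k where k: "(R, t) \<in> C k - N" using Rt by blast
  have "t' = t" if t': "(R, t') \<in> C k'" "d < length t" "d < length t'" "t' ! d = t ! d" for t' d k'
  proof -
    have "C k \<subseteq> C (max k k')" "C k' \<subseteq> C (max k k')"
      using mono by (simp_all add: monoD)
    then have "(R, t) \<in> C (max k k') - N" "(R, t') \<in> C (max k k')" using k t'(1) by blast+
    then show "t' = t" using iso t'(2-) unfolding isolated_fact_def by blast
  qed
  moreover have "set t \<inter> A = {}" using iso k unfolding isolated_fact_def by blast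
  ultimately show ?thesis unfolding isolated_fact_def by blast
qed

lemma chase_seq_extends_allowed:
  assumes chase: "chase_seq U \<Delta> \<Sigma> N C" and \<tau>: "\<tau> \<in> \<Sigma>"
    and trig: "trigger \<tau> (\<Union>k. C k) h" and avoid: "\<forall>x\<in>exported_vars \<tau>. h x \<notin> \<Delta>"
  shows "extends_to_head \<tau> (\<Union>k. C k) h"
proof -
  obtain k where k: "trigger \<tau> (C k) h" using trig unfolding trigger_def atom_maps_def by blast
  have "\<exists>m. extends_to_head \<tau> (C m) h"
  proof (cases "active_trigger \<tau> (C k) h")
    case True
    then have "allowed_trigger \<Delta> \<tau> (C k) h" using avoid unfolding allowed_trigger_def by blast
    then obtain m where "m \<ge> k" "\<not> active_trigger \<tau> (C m) h"
      using chase \<tau> unfolding chase_seq_def by blast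
    moreover have "trigger \<tau> (C m) h"
      using k monoD[OF chase_seq_mono[OF chase] \<open>m \<ge> k\<close>] by (rule trigger_mono)
    ultimately show ?thesis unfolding active_trigger_iff by blast
  next
    case False then show ?thesis using k unfolding active_trigger_iff by blast
  qed
  then show ?thesis by (blast intro: extends_to_head_mono)
qed

lemma isolated_fact_agree_eq:
  assumes iso: "isolated_fact (adom I) W R t" and t': "(R, t') \<in> I \<union> W"
    and d: "d < length t" "d < length t'" "t' ! d = t ! d"
  shows "t' = t"
proof (cases "(R, t') \<in> I")
  case True
  then have "t ! d \<in> adom I" using mem_adom[OF True nth_mem[OF d(2)]] d(3) by simp
  moreover have "t ! d \<in> set t" using d(1) by simp
  ultimately show ?thesis using iso unfolding isolated_fact_def by blast
next
  case False
  then show ?thesis using iso t' d unfolding isolated_fact_def by blast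
qed

lemma satisfies_fd_union_isolated:
  assumes fd: "satisfies_fd (I \<union> N) (R, D, j)" and D: "D \<noteq> {}" "D \<subseteq> {..<ar R}"
    and wf: "wf_instance ar (I \<union> W)"
    and iso: "\<forall>S t. (S, t) \<in> W - N \<longrightarrow> isolated_fact (adom I) W S t"
  shows "satisfies_fd (I \<union> W) (R, D, j)"
  unfolding satisfies_fd_def prod.case
proof (intro allI impI)
  fix t t' assume t: "(R, t) \<in> I \<union> W" and t': "(R, t') \<in> I \<union> W"
    and agree: "\<forall>i\<in>D. t ! i = t' ! i"
  have "length t = ar R" "length t' = ar R" using wf t t' unfolding wf_instance_def by fastforce+
  moreover obtain d where "d \<in> D" using D by blast
  ultimately have d: "d < length t" "d < length t'" "t ! d = t' ! d" using D agree by auto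
  consider "(R, t) \<in> W - N" | "(R, t') \<in> W - N" | "(R, t) \<in> I \<union> N" "(R, t') \<in> I \<union> N"
    using t t' by blast
  then show "t ! j = t' ! j"
  proof cases
    case 1
    then show ?thesis using isolated_fact_agree_eq[OF _ t' d(1,2)] iso d(3) by metis
  next
    case 2
    then show ?thesis using isolated_fact_agree_eq[OF _ t d(2,1)] iso d(3) by metis
  next
    case 3
    then show ?thesis using fd agree unfolding satisfies_fd_def by auto
  qed
qed

lemma chase_union_satisfies_UID:
  assumes chase: "chase_seq (adom I) (adom I \<inter> adom N) \<Sigma> N C" and \<tau>: "\<tau> \<in> \<Sigma>"
    and U: "is_UID ar \<tau>" and wfI: "wf_instance ar I" and satI: "satisfies_tgd I \<tau>"
    and iso: "\<forall>R t. (R, t) \<in> (\<Union>k. C k) - N \<longrightarrow> isolated_fact (adom I) (\<Union>k. C k) R t"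
    and pos: "\<forall>a\<in>adom I \<inter> adom N. \<forall>R i. occurs_at N a R i \<longrightarrow> occurs_at I a R i"
  shows "satisfies_tgd (I \<union> (\<Union>k. C k)) \<tau>"
  unfolding satisfies_tgd_iff
proof (intro allI impI)
  fix h assume trig: "trigger \<tau> (I \<union> (\<Union>k. C k)) h"
  let ?bs = "atom_args (tgd_body \<tau>)"
  let ?b = "(atom_rel (tgd_body \<tau>), map h ?bs)"
  obtain x where x: "exported_vars \<tau> = {x}" using U by (rule UID_exported_var)
  then obtain i where i: "i < length ?bs" "?bs ! i = x"
    unfolding exported_vars_def atom_vars_def by (metis IntD1 in_set_conv_nth insertI1)
  have hx: "map h ?bs ! i = h x" and hx_mem: "h x \<in> set (map h ?bs)"
    using i nth_mem[of i "map h ?bs"] by simp_all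
  consider "?b \<in> I" | "?b \<in> N" "h x \<in> adom I" | "?b \<in> (\<Union>k. C k)" "h x \<notin> adom I"
    | "?b \<in> (\<Union>k. C k) - N" "h x \<in> adom I"
    using trig unfolding trigger_def atom_maps_def by blast
  then have "extends_to_head \<tau> I h \<or> extends_to_head \<tau> (\<Union>k. C k) h"
  proof cases
    case 1
    then show ?thesis using satI unfolding satisfies_tgd_iff trigger_def atom_maps_def by blast
  next
    case 2
    have "occurs_at N (h x) (atom_rel (tgd_body \<tau>)) i"
      unfolding occurs_at_def using 2(1) i(1) hx by auto
    moreover have "h x \<in> adom N" using mem_adom[OF 2(1) hx_mem] .
    ultimately have "occurs_at I (h x) (atom_rel (tgd_body \<tau>)) i" using pos 2(2) by blast
    then obtain t where "(atom_rel (tgd_body \<tau>), t) \<in> I" "i < length t" "t ! i = h x"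
      unfolding occurs_at_def by blast
    moreover have "length t = ar (atom_rel (tgd_body \<tau>))"
      using wfI \<open>(atom_rel (tgd_body \<tau>), t) \<in> I\<close> unfolding wf_instance_def by auto
    ultimately show ?thesis using UID_extends_to_head_body_fact[OF U x satI _ _ i] by blast
  next
    case 3
    have "trigger \<tau> (\<Union>k. C k) h" unfolding trigger_def atom_maps_def using 3(1) .
    moreover have "\<forall>z\<in>exported_vars \<tau>. h z \<notin> adom I \<inter> adom N" using x 3(2) by simp
    ultimately show ?thesis using chase_seq_extends_allowed[OF chase \<tau>] by blast
  next
    case 4
    then have "set (map h ?bs) \<inter> adom I = {}" using iso unfolding isolated_fact_def by blast
    then show ?thesis using hx_mem 4(2) by blast
  qed
  then show "extends_to_head \<tau> (I \<union> (\<Union>k. C k)) h" by (blast intro: extends_to_head_mono)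
qed

theorem mainTheorem20:
  fixes ar :: "'r \<Rightarrow> nat"
    and \<Sigma>ID :: "('r, 'x) tgd set"
    and \<Sigma>FD :: "'r fd set"
    and I N W :: "('r, 'v) inst"
  assumes UIDs: "\<forall>\<tau>\<in>\<Sigma>ID. is_UID ar \<tau>"
    and FDs: "\<forall>\<phi>\<in>\<Sigma>FD. is_FD ar \<phi>"
    and FDs_nonempty_lhs: "\<forall>(R, D, j)\<in>\<Sigma>FD. D \<noteq> {}"
    and wfI: "wf_instance ar I"
    and wfN: "wf_instance ar N"
    and I_ID: "\<forall>\<tau>\<in>\<Sigma>ID. satisfies_tgd I \<tau>"
    and I_FD: "\<forall>\<phi>\<in>\<Sigma>FD. satisfies_fd I \<phi>"
    and IN_FD: "\<forall>\<phi>\<in>\<Sigma>FD. satisfies_fd (I \<union> N) \<phi>"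
    and pos: "\<forall>a\<in>adom I \<inter> adom N. \<forall>R i. occurs_at N a R i \<longrightarrow> occurs_at I a R i"
    and W: "chase_result (adom I) (adom I \<inter> adom N) \<Sigma>ID N W"
  shows "(\<forall>\<tau>\<in>\<Sigma>ID. satisfies_tgd (I \<union> W) \<tau>) \<and> (\<forall>\<phi>\<in>\<Sigma>FD. satisfies_fd (I \<union> W) \<phi>)"
proof -
  obtain C where chase: "chase_seq (adom I) (adom I \<inter> adom N) \<Sigma>ID N C" and W_def: "W = (\<Union>k. C k)"
    using W unfolding chase_result_def by blast
  have inv: "wf_instance ar (C k) \<and> (\<forall>R t. (R, t) \<in> C k - N \<longrightarrow> isolated_fact (adom I) (C k) R t)" for k
    using chase_seq_wf_isolated[OF chase UIDs wfN] by blast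
  have iso: "\<forall>R t. (R, t) \<in> W - N \<longrightarrow> isolated_fact (adom I) W R t"
    using isolated_fact_mono_chain[OF chase_seq_mono[OF chase]] inv unfolding W_def by blast
  have wf: "wf_instance ar (I \<union> W)"
    using wfI inv unfolding W_def wf_instance_def by blast
  show ?thesis
  proof (intro conjI ballI)
    fix \<tau> assume "\<tau> \<in> \<Sigma>ID"
    then show "satisfies_tgd (I \<union> W) \<tau>"
      using chase_union_satisfies_UID[OF chase _ _ wfI _ iso[unfolded W_def] pos] UIDs I_ID
      unfolding W_def by blast
  next
    fix \<phi> assume \<phi>: "\<phi> \<in> \<Sigma>FD"
    obtain R D j where RDj: "\<phi> = (R, D, j)" by (cases \<phi>)
    have "satisfies_fd (I \<union> N) (R, D, j)" "D \<noteq> {}" "D \<subseteq> {..<ar R}"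
      using \<phi> IN_FD FDs FDs_nonempty_lhs unfolding RDj is_FD_def by fastforce+
    then show "satisfies_fd (I \<union> W) \<phi>"
      unfolding RDj by (rule satisfies_fd_union_isolated[OF _ _ _ wf iso])
  qed
qed

end
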